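(* For every positive integer $n$, $$\big((\mathrm{Id}\cdot\mu)\ast\delta\big)(n)=-\big(\mathrm{Id}\ast(\mu\delta)\big)(n),$$ where $\mathrm{Id}\cdot\mu$ is $n\mapsto n\mu(n)$ and $\mu\delta$ is the pointwise product.
   Context: The arithmetic derivative $\delta$ is defined by $\delta(p)=1$ for every prime $p$ and $\delta(mn)=m\delta(n)+n\delta(m)$ for all positive integers $m,n$; equivalently $\delta(1)=0$ and $\delta(n)=n\sum_{p^\alpha\| n}\alpha/p$. $\mathrm{Id}(n)=n$, $\mu$ is the Möbius function. The Dirichlet convolution is $(u\ast v)(n)=\sum_{d\mid n}u(d)v(n/d)$. *)

theory Defs
  imports "HOL-Computational_Algebra.Computational_Algebra"
begin

definition moebius_mu :: "nat \<Rightarrow> int" where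
  "moebius_mu n = (if n = 0 \<or> \<not> squarefree n then 0
                   else (-1) ^ card (prime_factors n))"

(* arithmetic derivative: delta(n) = n * sum_{p^a || n} a/p ; delta(1) = 0; delta(0) = 0 by convention *)
definition arith_deriv :: "nat \<Rightarrow> int" where
  "arith_deriv n = (if n = 0 then 0 else
     int (\<Sum>p\<in>prime_factors n. multiplicity p n * (n div p)))"

definition dirichlet_conv :: "(nat \<Rightarrow> int) \<Rightarrow> (nat \<Rightarrow> int) \<Rightarrow> nat \<Rightarrow> int" where
  "dirichlet_conv u v n = (\<Sum>d | d dvd n. u d * v (n div d))"

end

theory Submission
  imports Defs
begin

text \<open>
  By the Leibniz rule, every factorisation \<open>n = d e\<close> gives \<open>\<delta>(n) = d \<delta>(e) + e \<delta>(d)\<close>.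
  Multiplying by \<open>\<mu>(d)\<close> and summing over the divisors \<open>d\<close> of \<open>n\<close>, the two terms
  become the two convolutions of the theorem, while the left side becomes
  \<open>\<delta>(n) \<Sum>\<^sub>d\<^sub>|\<^sub>n \<mu>(d)\<close>, which vanishes: the Moebius sum is \<open>0\<close> for \<open>n > 1\<close>,
  and \<open>\<delta>(1) = 0\<close>.
\<close>

lemma dirichlet_conv_commute:
  assumes "n > 0"
  shows "dirichlet_conv u v n = dirichlet_conv v u n"
  unfolding dirichlet_conv_def
  by (rule sum.reindex_bij_witness[where i="\<lambda>d. n div d" and j="\<lambda>d. n div d"])
     (use assms in \<open>auto simp: div_div_eq_right mult.commute\<close>)

lemma arith_deriv_eq_sum_superset:
  assumes "a > 0" "finite S" "prime_factors a \<subseteq> S" "\<forall>p\<in>S. prime p"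
  shows "arith_deriv a = int (\<Sum>p\<in>S. multiplicity p a * (a div p))"
proof -
  have "(\<Sum>p\<in>prime_factors a. multiplicity p a * (a div p))
      = (\<Sum>p\<in>S. multiplicity p a * (a div p))"
  proof (rule sum.mono_neutral_left)
    show "\<forall>p\<in>S - prime_factors a. multiplicity p a * (a div p) = 0"
    proof
      fix p assume "p \<in> S - prime_factors a"
      with assms have "\<not> p dvd a" using prime_factorsI[of a p] by auto
      then show "multiplicity p a * (a div p) = 0" by (simp add: not_dvd_imp_multiplicity_0)
    qed
  qed (use assms in auto)
  then show ?thesis using assms by (simp add: arith_deriv_def)
qed

lemma multiplicity_mult_div_prime:
  fixes a b p :: nat
  assumes "prime p"
  shows "multiplicity p a * (a * b div p) = b * (multiplicity p a * (a div p))"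
proof (cases "p dvd a")
  case True
  then have "a * b div p = b * (a div p)" by (metis div_mult_swap mult.commute)
  then show ?thesis by simp
next
  case False
  then show ?thesis by (simp add: not_dvd_imp_multiplicity_0)
qed

lemma arith_deriv_mult:
  assumes "a > 0" "b > 0"
  shows "arith_deriv (a * b) = int a * arith_deriv b + int b * arith_deriv a"
proof -
  let ?S = "prime_factors a \<union> prime_factors b"
  let ?t = "\<lambda>c p. multiplicity p c * (c div p)"
  have primes: "\<forall>p\<in>?S. prime p" by auto
  have "arith_deriv (a * b) = int (\<Sum>p\<in>?S. ?t (a * b) p)"
    using arith_deriv_eq_sum_superset[of "a * b" ?S] assms primes
    by (simp add: prime_factors_product)
  also have "(\<Sum>p\<in>?S. ?t (a * b) p) = (\<Sum>p\<in>?S. b * ?t a p + a * ?t b p)"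
  proof (rule sum.cong)
    fix p assume "p \<in> ?S"
    then have p: "prime p" by auto
    have "multiplicity p (a * b) = multiplicity p a + multiplicity p b"
      using assms p by (simp add: prime_elem_multiplicity_mult_distrib)
    moreover have "multiplicity p a * (a * b div p) = b * ?t a p"
      by (rule multiplicity_mult_div_prime[OF p])
    moreover have "multiplicity p b * (a * b div p) = a * ?t b p"
      using multiplicity_mult_div_prime[OF p, of b a] by (simp add: mult.commute)
    ultimately show "?t (a * b) p = b * ?t a p + a * ?t b p"
      by (simp only: add_mult_distrib)
  qed simp
  also have "\<dots> = b * (\<Sum>p\<in>?S. ?t a p) + a * (\<Sum>p\<in>?S. ?t b p)"
    by (simp add: sum.distrib sum_distrib_left)
  finally show ?thesis
    using arith_deriv_eq_sum_superset[of a ?S] arith_deriv_eq_sum_superset[of b ?S] assms primes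
    by (simp add: algebra_simps)
qed

lemma prod_prime_factors_dvd:
  fixes n :: nat
  assumes "n > 0" "T \<subseteq> prime_factors n"
  shows "\<Prod>T dvd n"
proof -
  have "\<Prod>T dvd \<Prod>(prime_factors n)"
    using assms(2) by (intro prod_dvd_prod_subset) auto
  also have "\<dots> dvd (\<Prod>p\<in>prime_factors n. p ^ multiplicity p n)"
    by (intro prod_dvd_prod dvd_power) (auto simp: prime_factors_multiplicity)
  also have "\<dots> = n"
    using assms(1) by (simp add: prod_prime_factors)
  finally show ?thesis .
qed

lemma
  fixes T :: "nat set"
  assumes "finite T" "\<forall>p\<in>T. prime p"
  shows prime_factors_prod_primes: "prime_factors (\<Prod>T) = T"
    and squarefree_prod_primes: "squarefree (\<Prod>T)"
    and moebius_mu_prod_primes: "moebius_mu (\<Prod>T) = (-1) ^ card T"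
proof -
  have "0 \<notin> id ` T" using assms by auto
  from prime_factors_prod[OF assms(1) this] assms
  show pf: "prime_factors (\<Prod>T) = T" by (simp add: prime_prime_factors)
  show sf: "squarefree (\<Prod>T)"
    using assms by (intro squarefree_prod_coprime[where f=id, simplified])
                   (auto simp: primes_coprime squarefree_prime)
  have "\<Prod>T \<noteq> 0" using assms by auto
  with pf sf show "moebius_mu (\<Prod>T) = (-1) ^ card T"
    by (simp add: moebius_mu_def)
qed

lemma prod_prime_factors_squarefree:
  fixes d :: nat
  assumes "d > 0" "squarefree d"
  shows "\<Prod>(prime_factors d) = d"
proof -
  have "\<Prod>(prime_factors d) = (\<Prod>p\<in>prime_factors d. p ^ multiplicity p d)"
    using assms squarefree_factorial_semiring'[of d] by (intro prod.cong) auto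
  also have "\<dots> = d" using assms by (simp add: prod_prime_factors)
  finally show ?thesis .
qed

text \<open>The squarefree divisors of \<open>n\<close> correspond to the subsets of its prime factors.\<close>

lemma sum_moebius_mu_divisors:
  fixes n :: nat
  assumes "n > 1"
  shows "(\<Sum>d | d dvd n. moebius_mu d) = 0"
proof -
  let ?P = "prime_factors n"
  let ?S = "{d. d dvd n \<and> squarefree d}"
  have "(\<Sum>d | d dvd n. moebius_mu d) = (\<Sum>d\<in>?S. moebius_mu d)"
    by (rule sum.mono_neutral_right) (use assms in \<open>auto simp: moebius_mu_def\<close>)
  also have "bij_betw Prod (Pow ?P) ?S"
  proof (rule bij_betw_byWitness[where f' = prime_factors])
    show "\<forall>T\<in>Pow ?P. prime_factors (\<Prod>T) = T"
      by (auto intro!: prime_factors_prod_primes intro: finite_subset)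
    show "\<forall>d\<in>?S. \<Prod>(prime_factors d) = d"
      by (auto intro!: prod_prime_factors_squarefree intro: Nat.gr0I)
    show "Prod ` Pow ?P \<subseteq> ?S"
      using assms
      by (auto intro!: prod_prime_factors_dvd squarefree_prod_primes intro: finite_subset)
    show "prime_factors ` ?S \<subseteq> Pow ?P"
      using assms by (auto intro: dvd_prime_factors[THEN subsetD])
  qed
  then have "(\<Sum>d\<in>?S. moebius_mu d) = (\<Sum>T\<in>Pow ?P. moebius_mu (\<Prod>T))"
    by (simp add: sum.reindex_bij_betw)
  also have "\<dots> = (\<Sum>T\<in>Pow ?P. (-1) ^ card T)"
    by (intro sum.cong refl moebius_mu_prod_primes) (auto intro: finite_subset)
  also have "\<dots> = (\<Prod>p\<in>?P. (1::int) - 1)"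
    using prod_diff_conv_sum[of ?P "\<lambda>_. 1::int" "\<lambda>_. 1"] by simp
  also have "\<dots> = 0"
  proof -
    obtain p where "prime p" "p dvd n" using assms prime_factor_nat[of n] by auto
    then have "p \<in> ?P" using assms by (auto intro: prime_factorsI)
    then show ?thesis by (metis diff_self prod_zero_iff finite_set_mset)
  qed
  finally show ?thesis .
qed

theorem corollary2p6:
  fixes n :: nat
  assumes "n > 0"
  shows "dirichlet_conv (\<lambda>k. int k * moebius_mu k) arith_deriv n
       = - dirichlet_conv (\<lambda>k. int k) (\<lambda>k. moebius_mu k * arith_deriv k) n"
proof -
  have "dirichlet_conv (\<lambda>k. int k * moebius_mu k) arith_deriv n
      + dirichlet_conv (\<lambda>k. moebius_mu k * arith_deriv k) (\<lambda>k. int k) n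
      = (\<Sum>d | d dvd n. moebius_mu d * arith_deriv n)"
    unfolding dirichlet_conv_def sum.distrib[symmetric]
  proof (rule sum.cong)
    fix d assume "d \<in> {d. d dvd n}"
    then have "n = d * (n div d)" "d > 0" "n div d > 0"
      using assms by (auto simp: dvd_div_eq_0_iff intro!: Nat.gr0I)
    then show "int d * moebius_mu d * arith_deriv (n div d)
        + moebius_mu d * arith_deriv d * int (n div d) = moebius_mu d * arith_deriv n"
      using arith_deriv_mult[of d "n div d"] by (simp add: algebra_simps)
  qed simp
  also have "\<dots> = arith_deriv n * (\<Sum>d | d dvd n. moebius_mu d)"
    by (simp add: sum_distrib_left mult.commute)
  also have "\<dots> = 0"
  proof (cases "n = 1")
    case True
    then show ?thesis by (simp add: arith_deriv_def)
  next
    case False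
    with assms sum_moebius_mu_divisors[of n] show ?thesis by simp
  qed
  finally show ?thesis
    using dirichlet_conv_commute[OF assms, of "\<lambda>k. int k"] by simp
qed

end
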